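(* Let $A$, $Q$ and $H\subseteq A^Q$ be non-empty finite sets, $n\ge3$ a natural number, and $\mathcal F$ a clone with carrier $A$ satisfying $\Delta^s_n$. Then $H\in\mathrm{Inv}_Q\mathcal F$ if and only if both of the following hold: (1) $H|_P\in\mathrm{Inv}_P\mathcal F$ for all $P\in[Q]^1\cup[Q]^{2,0}_H\cup\{Q^{(n)}_H\}$; (2) $H$ is decomposable over $[Q]^1\cup[Q]^{2,0}_H\cup\{Q^{(n)}_H\}$.
   Context: $\mathcal O(A)=\bigcup_{n<\omega}A^{A^n}$; $\mathcal F_{[n]}=\mathcal F\cap A^{A^n}$. Elements of $A^n$ are sequences $\mathbf x=x_0\dots x_{n-1}$; $\mathrm{ran}\,\mathbf x$ is the set of entries; $A^n_k=\{\mathbf x:|\mathrm{ran}\,\mathbf x|=k\}$, $A^n_{<n}=\bigcup_{k<n}A^n_k$. A clone with carrier $A$ is a subset of $\mathcal O(A)$ containing all projections and closed under composition. For $f\in\mathcal O(A)_{[m]}$ and $h_i\in A^Q$, $f(h_0,\dots,h_{m-1})$ is $q\mapsto f(h_0(q)\dots h_{m-1}(q))$; $\mathrm{Inv}_Q\mathcal F$ is the set of $H\subseteq A^Q$ closed under all such compositions with $f\in\mathcal F$. $h|_P$ is the restriction of $h$ to $P\cap\mathrm{dom}\,h$, $H|_P=\{h|_P:h\in H\}$, $H(q)=\{h(q):h\in H\}$. For $R\subseteq Q$, $(H|_R)|^Q=\{f\in A^Q:f|_R\in H|_R\}$; $H$ is decomposable over $\mathscr R\subseteq\mathscr P(Q)$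 if $H=\bigcap_{R\in\mathscr R}(H|_R)|^Q$. $[Q]^k$ is the set of $k$-element subsets of $Q$; $S_A$ the set of permutations of $A$. $[Q]^{2,0}_H$ is the set of $\{p,q\}\in[Q]^2$ for which there is $\sigma\in S_A$ with $h(q)=\sigma(h(p))$ for all $h\in H$. $Q^{(n)}_H=\{q\in Q:|H(q)|<n\}$. $\mathcal F$ satisfies $\Delta^s_n$ if there is $i<n$ such that for every $\mathbf a\in A^n_n$ and every $a\in\mathrm{ran}\,\mathbf a$ there is $s\in\mathcal F_{[n]}$ with $s(\mathbf a)=a$ and $s(\mathbf x)=x_i$ for all $\mathbf x=x_0\dots x_{n-1}\in A^n_{<n}$. *)

theory Defs
  imports "HOL-Library.FuncSet"
begin

text \<open>Tuples in A^n are functions {..<n} ->E A; an operation is a pair (arity, function),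
  the function being extensional on A^n.  Elements of A^Q are functions Q ->E A.\<close>

type_synonym 'a op = "nat \<times> ((nat \<Rightarrow> 'a) \<Rightarrow> 'a)"

definition tuples :: "'a set \<Rightarrow> nat \<Rightarrow> (nat \<Rightarrow> 'a) set" where
  "tuples A n = {..<n} \<rightarrow>\<^sub>E A"

definition ops :: "'a set \<Rightarrow> 'a op set" where
  "ops A = {(n, f). f \<in> tuples A n \<rightarrow>\<^sub>E A}"

definition is_clone :: "'a set \<Rightarrow> 'a op set \<Rightarrow> bool" where
  "is_clone A F \<longleftrightarrow>
     F \<subseteq> ops A \<and>
     (\<forall>n i. i < n \<longrightarrow> (n, restrict (\<lambda>x. x i) (tuples A n)) \<in> F) \<and>
     (\<forall>m f n g. (m, f) \<in> F \<and> (\<forall>i<m. (n, g i) \<in> F) \<longrightarrow>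
        (n, restrict (\<lambda>x. f (\<lambda>i\<in>{..<m}. g i x)) (tuples A n)) \<in> F)"

definition Inv :: "'a set \<Rightarrow> 'q set \<Rightarrow> 'a op set \<Rightarrow> ('q \<Rightarrow> 'a) set set" where
  "Inv A Q F = {H. H \<subseteq> Q \<rightarrow>\<^sub>E A \<and>
     (\<forall>m f h. (m, f) \<in> F \<and> (\<forall>i<m. h i \<in> H) \<longrightarrow>
        (\<lambda>q\<in>Q. f (\<lambda>i\<in>{..<m}. h i q)) \<in> H)}"

definition restr_set :: "('q \<Rightarrow> 'a) set \<Rightarrow> 'q set \<Rightarrow> ('q \<Rightarrow> 'a) set" where
  "restr_set H P = (\<lambda>h. restrict h P) ` H"

definition lift_set :: "'a set \<Rightarrow> 'q set \<Rightarrow> 'q set \<Rightarrow> ('q \<Rightarrow> 'a) set \<Rightarrow> ('q \<Rightarrow> 'a) set" where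
  "lift_set A Q R H = {f \<in> Q \<rightarrow>\<^sub>E A. restrict f R \<in> restr_set H R}"

definition decomposable :: "'a set \<Rightarrow> 'q set \<Rightarrow> 'q set set \<Rightarrow> ('q \<Rightarrow> 'a) set \<Rightarrow> bool" where
  "decomposable A Q RR H \<longleftrightarrow> H = (\<Inter>R\<in>RR. lift_set A Q R H)"

definition ksubsets :: "'q set \<Rightarrow> nat \<Rightarrow> 'q set set" where
  "ksubsets Q k = {S. S \<subseteq> Q \<and> finite S \<and> card S = k}"

definition pairs0 :: "'a set \<Rightarrow> 'q set \<Rightarrow> ('q \<Rightarrow> 'a) set \<Rightarrow> 'q set set" where
  "pairs0 A Q H = {S \<in> ksubsets Q 2. \<exists>p q. S = {p, q} \<and>
      (\<exists>\<sigma>. bij_betw \<sigma> A A \<and> (\<forall>h\<in>H. h q = \<sigma> (h p)))}"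

definition proj_set :: "('q \<Rightarrow> 'a) set \<Rightarrow> 'q \<Rightarrow> 'a set" where
  "proj_set H q = (\<lambda>h. h q) ` H"

definition small_coords :: "'q set \<Rightarrow> ('q \<Rightarrow> 'a) set \<Rightarrow> nat \<Rightarrow> 'q set" where
  "small_coords Q H n = {q \<in> Q. card (proj_set H q) < n}"

definition tuples_k :: "'a set \<Rightarrow> nat \<Rightarrow> nat \<Rightarrow> (nat \<Rightarrow> 'a) set" where
  "tuples_k A n k = {x \<in> tuples A n. card (x ` {..<n}) = k}"

definition tuples_lt :: "'a set \<Rightarrow> nat \<Rightarrow> (nat \<Rightarrow> 'a) set" where
  "tuples_lt A n = (\<Union>k<n. tuples_k A n k)"

definition Delta_s :: "'a set \<Rightarrow> 'a op set \<Rightarrow> nat \<Rightarrow> bool" where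
  "Delta_s A F n \<longleftrightarrow> (\<exists>i<n. \<forall>a\<in>tuples_k A n n. \<forall>c\<in>a ` {..<n}.
     \<exists>s. (n, s) \<in> F \<and> s a = c \<and> (\<forall>x\<in>tuples_lt A n. s x = x i))"

end

theory Submission
  imports Defs
begin

text \<open>
  Restrictions of an invariant relation are invariant, and a relation that is decomposable over
  invariant restrictions is invariant; the substance is that every invariant \<open>H\<close> decomposes
  over the given family.  An operation from \<open>\<Delta>\<^sup>s\<^sub>n\<close> applied to \<open>n\<close> members of \<open>H\<close> acts
  as a fixed projection on every coordinate where they take fewer than \<open>n\<close> values, but may
  pick any of their values at a coordinate \<open>q\<close> where these are pairwise distinct.  If \<open>|H(q)| \<ge> n\<close>,
  this changes the value of a member of \<open>H\<close> at \<open>q\<close> to any other value while fixing it on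
  coordinates that are small or freely combined with \<open>q\<close>.  Two coordinates with at least \<open>n\<close>
  values that are not freely combined are linked by a permutation of \<open>A\<close>, i.e. form a pair in
  \<open>pairs0 A Q H\<close>.  Hence a function matching \<open>H\<close> on all members of the family can be
  matched by a member of \<open>H\<close> coordinate by coordinate.
\<close>

lemma exists_third_element:
  assumes "finite V" "3 \<le> card V"
  obtains d where "d \<in> V" "d \<noteq> a" "d \<noteq> b"
proof -
  have "\<not> V \<subseteq> {a, b}"
    using card_mono[of "{a, b}" V] card_insert_le_m1[of 2 "{b}" a] assms by auto
  then show ?thesis using that by blast
qed

lemma card_image_less_if_not_inj_on:
  assumes "finite X" "\<not> inj_on f X"
  shows "card (f ` X) < card X"
  using assms card_image_le[of X f] inj_on_iff_eq_card[of X f] by linarith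

lemma inj_on_extend_into:
  assumes "finite I" "finite V" "card I \<le> card V" "K \<subseteq> I"
    and "inj_on \<phi> K" "\<phi> ` K \<subseteq> V"
  obtains e where "inj_on e I" "e ` I \<subseteq> V" "\<And>k. k \<in> K \<Longrightarrow> e k = \<phi> k"
proof -
  have "card (I - K) \<le> card (V - \<phi> ` K)"
    using assms finite_subset[OF assms(4)]
    by (simp add: card_Diff_subset card_image card_mono)
  then obtain g where g: "g ` (I - K) \<subseteq> V - \<phi> ` K" "inj_on g (I - K)"
    using card_le_inj assms(1,2) by (meson finite_Diff)
  define e where "e x = (if x \<in> K then \<phi> x else g x)" for x
  have "inj_on e (K \<union> (I - K))"
    unfolding inj_on_Un using g assms(5) by (auto simp: e_def inj_on_def)
  moreover have "K \<union> (I - K) = I" using assms(4) by blast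
  moreover have "e ` I \<subseteq> V" using g assms(6) by (auto simp: e_def)
  ultimately show ?thesis using that[of e] by (simp add: e_def)
qed

lemma bij_betw_extend_to_permutation:
  assumes "finite A" "X \<subseteq> A" "Y \<subseteq> A" "bij_betw \<phi> X Y"
  obtains \<sigma> where "bij_betw \<sigma> A A" "\<And>x. x \<in> X \<Longrightarrow> \<sigma> x = \<phi> x"
proof -
  obtain \<sigma> where \<sigma>: "inj_on \<sigma> A" "\<sigma> ` A \<subseteq> A" "\<And>x. x \<in> X \<Longrightarrow> \<sigma> x = \<phi> x"
    using inj_on_extend_into[of A A X \<phi>] assms by (auto simp: bij_betw_def)
  then have "bij_betw \<sigma> A A" using endo_inj_surj[OF assms(1)] by (simp add: bij_betw_def)
  then show ?thesis using that \<sigma>(3) by blast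
qed

lemma restrict_pointwise_apply:
  assumes "P \<subseteq> Q"
  shows "restrict (\<lambda>q\<in>Q. f (\<lambda>i\<in>{..<m}. h i q)) P = (\<lambda>q\<in>P. f (\<lambda>i\<in>{..<m}. restrict (h i) P q))"
  using assms by (auto simp: Int_absorb1 intro!: restrict_ext)

lemma restr_set_PiE:
  assumes "H \<subseteq> Q \<rightarrow>\<^sub>E A" "P \<subseteq> Q"
  shows "restr_set H P \<subseteq> P \<rightarrow>\<^sub>E A"
  using assms unfolding restr_set_def by (auto simp: restrict_PiE_iff dest!: PiE_mem)

lemma Inv_PiE: "H \<in> Inv A Q F \<Longrightarrow> H \<subseteq> Q \<rightarrow>\<^sub>E A"
  unfolding Inv_def by blast

lemma Inv_closed:
  assumes "H \<in> Inv A Q F" "(m, f) \<in> F" "\<And>i. i < m \<Longrightarrow> h i \<in> H"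
  shows "(\<lambda>q\<in>Q. f (\<lambda>i\<in>{..<m}. h i q)) \<in> H"
  using assms unfolding Inv_def by blast

lemma restr_set_Inv:
  assumes "H \<in> Inv A Q F" "P \<subseteq> Q"
  shows "restr_set H P \<in> Inv A P F"
  unfolding Inv_def
proof (intro CollectI conjI allI impI)
  show "restr_set H P \<subseteq> P \<rightarrow>\<^sub>E A"
    using restr_set_PiE[OF Inv_PiE] assms by blast
  fix m f h'
  assume mf: "(m, f) \<in> F \<and> (\<forall>i<m. h' i \<in> restr_set H P)"
  then have "\<forall>i<m. \<exists>h\<in>H. h' i = restrict h P"
    unfolding restr_set_def by blast
  then obtain h where h: "\<forall>i<m. h i \<in> H \<and> h' i = restrict (h i) P"
    by metis
  then have "(\<lambda>q\<in>Q. f (\<lambda>i\<in>{..<m}. h i q)) \<in> H"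
    using Inv_closed[OF assms(1)] mf by blast
  moreover have "(\<lambda>q\<in>P. f (\<lambda>i\<in>{..<m}. h' i q)) = restrict (\<lambda>q\<in>Q. f (\<lambda>i\<in>{..<m}. h i q)) P"
    unfolding restrict_pointwise_apply[OF assms(2)] using h by (intro restrict_ext arg_cong[where f = f]) simp
  ultimately show "(\<lambda>q\<in>P. f (\<lambda>i\<in>{..<m}. h' i q)) \<in> restr_set H P"
    unfolding restr_set_def by blast
qed

lemma Inv_if_decomposable:
  assumes "F \<subseteq> ops A" "H \<subseteq> Q \<rightarrow>\<^sub>E A" "decomposable A Q RR H"
    and "\<And>R. R \<in> RR \<Longrightarrow> R \<subseteq> Q \<and> restr_set H R \<in> Inv A R F"
  shows "H \<in> Inv A Q F"
  unfolding Inv_def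
proof (intro CollectI conjI allI impI)
  show "H \<subseteq> Q \<rightarrow>\<^sub>E A" by (fact assms(2))
  fix m f h
  assume mf: "(m, f) \<in> F \<and> (\<forall>i<m. h i \<in> H)"
  let ?k = "\<lambda>q\<in>Q. f (\<lambda>i\<in>{..<m}. h i q)"
  have "?k \<in> Q \<rightarrow>\<^sub>E A"
  proof
    fix q assume "q \<in> Q"
    then have "h i q \<in> A" if "i < m" for i
      using mf assms(2) that by (meson PiE_mem subsetD)
    then have "(\<lambda>i\<in>{..<m}. h i q) \<in> tuples A m"
      unfolding tuples_def by simp
    moreover have "f \<in> tuples A m \<rightarrow>\<^sub>E A"
      using mf assms(1) unfolding ops_def by blast
    ultimately show "?k q \<in> A"
      using \<open>q \<in> Q\<close> by auto
  qed simp
  moreover have "restrict ?k R \<in> restr_set H R" if "R \<in> RR" for R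
  proof -
    have R: "R \<subseteq> Q" "restr_set H R \<in> Inv A R F" using assms(4)[OF that] by auto
    have "restrict (h i) R \<in> restr_set H R" if "i < m" for i
      using mf that unfolding restr_set_def by auto
    then have "(\<lambda>q\<in>R. f (\<lambda>i\<in>{..<m}. restrict (h i) R q)) \<in> restr_set H R"
      using mf by (intro Inv_closed[OF R(2)]) blast+
    then show ?thesis by (subst restrict_pointwise_apply[OF R(1)])
  qed
  ultimately have "?k \<in> (\<Inter>R\<in>RR. lift_set A Q R H)"
    unfolding lift_set_def by blast
  then show "?k \<in> H"
    using assms(3) unfolding decomposable_def by blast
qed

lemma subset_lift_set:
  assumes "H \<subseteq> Q \<rightarrow>\<^sub>E A"
  shows "H \<subseteq> lift_set A Q R H"
  using assms unfolding lift_set_def restr_set_def by auto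

lemma lift_set_agrees:
  assumes "f \<in> lift_set A Q R H"
  obtains h where "h \<in> H" "\<And>r. r \<in> R \<Longrightarrow> h r = f r"
proof -
  obtain h where "h \<in> H" "restrict f R = restrict h R"
    using assms unfolding lift_set_def restr_set_def by auto
  then show ?thesis using that by (metis restrict_apply')
qed

lemma pairs0_value_eq:
  assumes "{p, q} \<in> pairs0 A Q H" "H \<subseteq> Q \<rightarrow>\<^sub>E A"
    and "g \<in> H" "h \<in> H" "g p = h p"
  shows "g q = h q"
proof -
  obtain p' q' \<sigma> where pq: "{p, q} = {p', q'}" "bij_betw \<sigma> A A" "\<forall>h\<in>H. h q' = \<sigma> (h p')"
    using assms(1) unfolding pairs0_def by blast
  consider "p = p'" "q = q'" | "p = q'" "q = p'"
    using pq(1) by (auto simp: doubleton_eq_iff)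
  then show ?thesis
  proof cases
    case 1
    then have "g q = \<sigma> (g p)" "h q = \<sigma> (h p)" using pq(3) assms(3,4) by auto
    then show ?thesis using assms(5) by simp
  next
    case 2
    have "q \<in> Q" using assms(1) unfolding pairs0_def ksubsets_def by auto
    then have "g q \<in> A" "h q \<in> A" using assms(2-4) by (meson PiE_mem subsetD)+
    moreover have "g p = \<sigma> (g q)" "h p = \<sigma> (h q)" using 2 pq(3) assms(3,4) by auto
    ultimately show ?thesis using pq(2) assms(5) by (metis bij_betw_imp_inj_on inj_onD)
  qed
qed

definition free_pair :: "('q \<Rightarrow> 'a) set \<Rightarrow> 'q \<Rightarrow> 'q \<Rightarrow> bool" where
  "free_pair H p q \<longleftrightarrow> (\<forall>x\<in>proj_set H p. \<forall>y\<in>proj_set H q. \<exists>h\<in>H. h p = x \<and> h q = y)"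

locale Delta_s_invariant =
  fixes A :: "'a set" and Q :: "'q set" and H :: "('q \<Rightarrow> 'a) set"
    and F :: "'a op set" and n i :: nat
  assumes finite_A: "finite A" and H_Inv: "H \<in> Inv A Q F"
    and n_ge_3: "3 \<le> n" and i_less_n: "i < n"
    and Delta: "\<forall>a\<in>tuples_k A n n. \<forall>c\<in>a ` {..<n}.
      \<exists>s. (n, s) \<in> F \<and> s a = c \<and> (\<forall>x\<in>tuples_lt A n. s x = x i)"
begin

lemma value_in_A:
  assumes "h \<in> H" "r \<in> Q"
  shows "h r \<in> A"
proof -
  have "h \<in> Q \<rightarrow>\<^sub>E A" using Inv_PiE[OF H_Inv] assms(1) by blast
  then show ?thesis using assms(2) by (rule PiE_mem)
qed

lemma proj_set_subset: "q \<in> Q \<Longrightarrow> proj_set H q \<subseteq> A"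
  using value_in_A unfolding proj_set_def by blast

lemma finite_proj_set: "q \<in> Q \<Longrightarrow> finite (proj_set H q)"
  using finite_subset[OF proj_set_subset finite_A] .

lemma third_value:
  assumes "q \<in> Q" "n \<le> card (proj_set H q)"
  obtains d where "d \<in> proj_set H q" "d \<noteq> a" "d \<noteq> b"
proof -
  have "3 \<le> card (proj_set H q)" using assms(2) n_ge_3 by linarith
  then show ?thesis by (rule exists_third_element[OF finite_proj_set[OF assms(1)]]) (rule that)
qed

lemma Delta_s_select:
  assumes hh: "\<And>t. t < n \<Longrightarrow> hh t \<in> H" and "S \<subseteq> Q"
    and not_inj: "\<And>r. r \<in> S \<Longrightarrow> \<not> inj_on (\<lambda>t. hh t r) {..<n}"
    and "q \<in> Q" and inj: "inj_on (\<lambda>t. hh t q) {..<n}" and "t < n"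
  shows "\<exists>h\<in>H. (\<forall>r\<in>S. h r = hh i r) \<and> h q = hh t q"
proof -
  define a where "a = (\<lambda>t\<in>{..<n}. hh t q)"
  have "a \<in> tuples A n"
    unfolding a_def tuples_def using hh value_in_A \<open>q \<in> Q\<close> by simp
  moreover have "card (a ` {..<n}) = n"
    unfolding a_def using card_image[OF inj] by simp
  ultimately have "a \<in> tuples_k A n n" unfolding tuples_k_def by blast
  moreover have "hh t q \<in> a ` {..<n}" using \<open>t < n\<close> unfolding a_def by simp
  ultimately obtain s where s: "(n, s) \<in> F" "s a = hh t q" "\<forall>x\<in>tuples_lt A n. s x = x i"
    using Delta[rule_format] by blast
  define h where "h = (\<lambda>r\<in>Q. s (\<lambda>t\<in>{..<n}. hh t r))"
  have "h \<in> H" unfolding h_def using s(1) hh by (rule Inv_closed[OF H_Inv])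
  moreover have "h r = hh i r" if "r \<in> S" for r
  proof -
    let ?x = "\<lambda>t\<in>{..<n}. hh t r"
    have "card (?x ` {..<n}) < n"
      using card_image_less_if_not_inj_on[OF _ not_inj[OF that]] by simp
    moreover have "?x \<in> tuples A n"
      using hh value_in_A that \<open>S \<subseteq> Q\<close> unfolding tuples_def by auto
    ultimately have "?x \<in> tuples_lt A n" unfolding tuples_lt_def tuples_k_def by auto
    then show ?thesis using s(3) that \<open>S \<subseteq> Q\<close> i_less_n unfolding h_def by auto
  qed
  moreover have "h q = hh t q" using \<open>q \<in> Q\<close> s(2) unfolding h_def a_def by simp
  ultimately show ?thesis by blast
qed

lemma switch_value:
  assumes "q \<in> Q" "n \<le> card (proj_set H q)" "S \<subseteq> Q"
    and g: "g \<in> H" "g' \<in> H" "g'' \<in> H"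
    and distinct: "g q \<noteq> g' q" "g q \<noteq> g'' q" "g' q \<noteq> g'' q"
    and collide: "\<And>r. r \<in> S \<Longrightarrow>
      card (proj_set H r) < n \<or> g r = g' r \<or> g r = g'' r \<or> g' r = g'' r"
  shows "\<exists>h\<in>H. (\<forall>r\<in>S. h r = g r) \<and> h q = g' q"
proof -
  obtain j where j: "j \<in> {..<n}" "j \<noteq> i"
    using exists_third_element[of "{..<n}" i i] n_ge_3 by auto
  obtain k where k: "k \<in> {..<n}" "k \<noteq> i" "k \<noteq> j"
    using exists_third_element[of "{..<n}" i j] n_ge_3 by auto
  define \<phi> where "\<phi> t = (if t = i then g q else if t = j then g' q else g'' q)" for t
  have "inj_on \<phi> {i, j, k}" using j k distinct by (auto simp: \<phi>_def inj_on_def)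
  moreover have "\<phi> ` {i, j, k} \<subseteq> proj_set H q" using g by (auto simp: \<phi>_def proj_set_def)
  moreover have "{i, j, k} \<subseteq> {..<n}" using i_less_n j k by blast
  ultimately obtain e where e: "inj_on e {..<n}" "e ` {..<n} \<subseteq> proj_set H q"
    "\<And>t. t \<in> {i, j, k} \<Longrightarrow> e t = \<phi> t"
    using inj_on_extend_into[of "{..<n}" "proj_set H q"] finite_proj_set[OF \<open>q \<in> Q\<close>] assms(2)
    by (metis card_lessThan finite_lessThan)
  have "\<exists>h\<in>H. h q = e t" if "t < n" for t
  proof -
    have "e t \<in> (\<lambda>h. h q) ` H" using e(2) that unfolding proj_set_def by blast
    then show ?thesis by (metis imageE)
  qed
  then obtain hh0 where hh0: "\<And>t. t < n \<Longrightarrow> hh0 t \<in> H \<and> hh0 t q = e t" by metis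
  define hh where "hh t = (if t = i then g else if t = j then g' else if t = k then g'' else hh0 t)" for t
  have hh_ijk: "hh i = g" "hh j = g'" "hh k = g''" using j k by (simp_all add: hh_def)
  have hh: "hh t \<in> H" "hh t q = e t" if "t < n" for t
    using hh0[OF that] e(3) g j k by (auto simp: hh_def \<phi>_def)
  have "inj_on (\<lambda>t. hh t q) {..<n}" using e(1) hh(2) by (simp add: inj_on_def)
  moreover have "\<not> inj_on (\<lambda>t. hh t r) {..<n}" if "r \<in> S" for r
  proof
    assume inj_r: "inj_on (\<lambda>t. hh t r) {..<n}"
    have "r \<in> Q" using that \<open>S \<subseteq> Q\<close> by blast
    have "(\<lambda>t. hh t r) ` {..<n} \<subseteq> proj_set H r" using hh(1) unfolding proj_set_def by auto
    then have "card ((\<lambda>t. hh t r) ` {..<n}) \<le> card (proj_set H r)"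
      using card_mono[OF finite_proj_set[OF \<open>r \<in> Q\<close>]] by blast
    then have "n \<le> card (proj_set H r)" unfolding card_image[OF inj_r] by simp
    moreover have "i \<noteq> j" "i \<noteq> k" "j \<noteq> k" "i \<in> {..<n}" using j k i_less_n by auto
    ultimately show False
      using collide[OF that] inj_r j k unfolding inj_on_def hh_ijk[symmetric] by auto
  qed
  ultimately obtain h where "h \<in> H" "\<forall>r\<in>S. h r = hh i r" "h q = hh j q"
    using Delta_s_select[of hh S q j] hh(1) \<open>S \<subseteq> Q\<close> \<open>q \<in> Q\<close> j by blast
  then show ?thesis unfolding hh_ijk by blast
qed

lemma extend_value:
  assumes "q \<in> Q" "n \<le> card (proj_set H q)" "finite S" "S \<subseteq> Q"
    and free: "\<And>p. p \<in> S \<Longrightarrow> n \<le> card (proj_set H p) \<Longrightarrow> free_pair H p q"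
    and "g \<in> H" "c \<in> proj_set H q"
  shows "\<exists>h\<in>H. (\<forall>r\<in>S. h r = g r) \<and> h q = c"
  using assms(3-5)
proof (induction S rule: finite_induct)
  case empty
  then show ?case using \<open>c \<in> proj_set H q\<close> unfolding proj_set_def by blast
next
  case (insert p S)
  show ?case
  proof (cases "c = g q")
    case True
    then show ?thesis using \<open>g \<in> H\<close> by blast
  next
    case False
    obtain g' where g': "g' \<in> H" "\<forall>r\<in>S. g' r = g r" "g' q = c"
      using insert by blast
    obtain d where d: "d \<in> proj_set H q" "d \<noteq> g q" "d \<noteq> c"
      by (rule third_value[OF \<open>q \<in> Q\<close> assms(2)])
    obtain g'' where g'': "g'' \<in> H" "g'' q = d" "n \<le> card (proj_set H p) \<longrightarrow> g'' p = g p"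
    proof (cases "n \<le> card (proj_set H p)")
      case True
      have "g p \<in> proj_set H p" using \<open>g \<in> H\<close> unfolding proj_set_def by blast
      then show ?thesis using that insert.prems(2) True d(1) unfolding free_pair_def by blast
    next
      case False
      then show ?thesis using that d(1) unfolding proj_set_def by blast
    qed
    have "\<exists>h\<in>H. (\<forall>r\<in>insert p S. h r = g r) \<and> h q = g' q"
    proof (rule switch_value[OF \<open>q \<in> Q\<close> assms(2) insert.prems(1) \<open>g \<in> H\<close> g'(1) g''(1)])
      show "g q \<noteq> g' q" "g q \<noteq> g'' q" "g' q \<noteq> g'' q" using False g'(3) g''(2) d by auto
      show "card (proj_set H r) < n \<or> g r = g' r \<or> g r = g'' r \<or> g' r = g'' r"
        if "r \<in> insert p S" for r
        using that g'(2) g''(3) by fastforce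
    qed
    then show ?thesis using g'(3) by simp
  qed
qed

lemma free_pair_commute: "free_pair H p q \<longleftrightarrow> free_pair H q p"
  unfolding free_pair_def by blast

lemma free_pair_if_not_functional:
  assumes "q \<in> Q" "n \<le> card (proj_set H q)" "p \<in> Q"
    and uv: "u \<in> H" "v \<in> H" "u p = v p" "u q \<noteq> v q"
  shows "free_pair H p q"
proof -
  have single_p: "{p} \<subseteq> Q" using \<open>p \<in> Q\<close> by blast
  have full_fibre: "\<exists>h\<in>H. h p = u p \<and> h q = d" if d: "d \<in> proj_set H q" for d
  proof (cases "d = u q \<or> d = v q")
    case True
    then show ?thesis using uv by auto
  next
    case False
    obtain w where w: "w \<in> H" "w q = d" using d unfolding proj_set_def by blast
    have "\<exists>h\<in>H. (\<forall>r\<in>{p}. h r = u r) \<and> h q = w q"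
      by (rule switch_value[OF assms(1,2) single_p uv(1) w(1) uv(2)]) (use uv False w in auto)
    then show ?thesis using w(2) by auto
  qed
  have "\<exists>h\<in>H. h p = x \<and> h q = d" if x: "x \<in> proj_set H p" and d: "d \<in> proj_set H q" for x d
  proof -
    obtain g where g: "g \<in> H" "g p = x" using x unfolding proj_set_def by blast
    show ?thesis
    proof (cases "d = g q")
      case True
      then show ?thesis using g by blast
    next
      case False
      obtain d' where d': "d' \<in> proj_set H q" "d' \<noteq> g q" "d' \<noteq> d"
        by (rule third_value[OF assms(1,2)])
      obtain w where w: "w \<in> H" "w p = u p" "w q = d" using full_fibre d by blast
      obtain w' where w': "w' \<in> H" "w' p = u p" "w' q = d'" using full_fibre d'(1) by blast
      have "\<exists>h\<in>H. (\<forall>r\<in>{p}. h r = g r) \<and> h q = w q"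
        by (rule switch_value[OF assms(1,2) single_p g(1) w(1) w'(1)]) (use False w w' d' in auto)
      then show ?thesis using g(2) w(3) by auto
    qed
  qed
  then show ?thesis unfolding free_pair_def by blast
qed

lemma pairs0_if_not_free:
  assumes p: "p \<in> Q" "n \<le> card (proj_set H p)" and q: "q \<in> Q" "n \<le> card (proj_set H q)"
    and "p \<noteq> q" and not_free: "\<not> free_pair H p q"
  shows "{p, q} \<in> pairs0 A Q H"
proof -
  have determined: "u q = v q" if "u \<in> H" "v \<in> H" "u p = v p" for u v
    using free_pair_if_not_functional[OF q p(1) that] not_free by blast
  have injective: "u p = v p" if "u \<in> H" "v \<in> H" "u q = v q" for u v
    using free_pair_if_not_functional[OF p q(1) that] not_free free_pair_commute by blast
  define \<phi> where "\<phi> x = (SOME h. h \<in> H \<and> h p = x) q" for x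
  have \<phi>: "\<phi> (h p) = h q" if "h \<in> H" for h
  proof -
    have "\<exists>h'. h' \<in> H \<and> h' p = h p" using that by blast
    then have "(SOME h'. h' \<in> H \<and> h' p = h p) \<in> H \<and> (SOME h'. h' \<in> H \<and> h' p = h p) p = h p"
      by (rule someI_ex)
    then show ?thesis unfolding \<phi>_def using determined that by blast
  qed
  have "bij_betw \<phi> (proj_set H p) (proj_set H q)"
  proof (rule bij_betw_imageI)
    show "inj_on \<phi> (proj_set H p)"
      unfolding proj_set_def inj_on_def using \<phi> injective by auto
    show "\<phi> ` proj_set H p = proj_set H q"
      unfolding proj_set_def using \<phi> by (auto simp: image_iff)
  qed
  then obtain \<sigma> where \<sigma>: "bij_betw \<sigma> A A" "\<And>x. x \<in> proj_set H p \<Longrightarrow> \<sigma> x = \<phi> x"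
    using bij_betw_extend_to_permutation[OF finite_A proj_set_subset[OF p(1)] proj_set_subset[OF q(1)]]
    by blast
  have "\<forall>h\<in>H. h q = \<sigma> (h p)" using \<sigma>(2) \<phi> unfolding proj_set_def by auto
  moreover have "{p, q} \<in> ksubsets Q 2" unfolding ksubsets_def using p q \<open>p \<noteq> q\<close> by auto
  ultimately show ?thesis unfolding pairs0_def using \<sigma>(1) by blast
qed

lemma extend_agreement:
  assumes lift: "\<And>R. R \<in> ksubsets Q 1 \<union> pairs0 A Q H \<Longrightarrow> f \<in> lift_set A Q R H"
    and "finite S" "S \<subseteq> Q" "small_coords Q H n \<subseteq> S" "q \<in> Q"
    and g: "g \<in> H" "\<And>r. r \<in> S \<Longrightarrow> g r = f r"
  shows "\<exists>h\<in>H. \<forall>r\<in>insert q S. h r = f r"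
proof (cases "q \<in> S")
  case True
  then show ?thesis using g by auto
next
  case False
  then have big_q: "n \<le> card (proj_set H q)"
    using assms(4,5) unfolding small_coords_def by auto
  show ?thesis
  proof (cases "\<exists>p\<in>S. {p, q} \<in> pairs0 A Q H")
    case True
    then obtain p where p: "p \<in> S" "{p, q} \<in> pairs0 A Q H" by blast
    obtain h where h: "h \<in> H" "\<And>r. r \<in> {p, q} \<Longrightarrow> h r = f r"
      using lift_set_agrees[OF lift] p(2) by blast
    have "g q = h q"
      using pairs0_value_eq[OF p(2) Inv_PiE[OF H_Inv] g(1) h(1)] g(2)[OF p(1)] h(2) by simp
    then show ?thesis using g h(2) by auto
  next
    case False
    have "{q} \<in> ksubsets Q 1" unfolding ksubsets_def using \<open>q \<in> Q\<close> by simp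
    then obtain h where "h \<in> H" "h q = f q"
      using lift_set_agrees[OF lift] by blast
    then have "f q \<in> proj_set H q" unfolding proj_set_def by (metis image_eqI)
    moreover have "free_pair H p q" if "p \<in> S" "n \<le> card (proj_set H p)" for p
      using pairs0_if_not_free[of p q] that False \<open>q \<notin> S\<close> \<open>q \<in> Q\<close> big_q \<open>S \<subseteq> Q\<close> by blast
    ultimately have "\<exists>h\<in>H. (\<forall>r\<in>S. h r = g r) \<and> h q = f q"
      using extend_value[OF \<open>q \<in> Q\<close> big_q \<open>finite S\<close> \<open>S \<subseteq> Q\<close> _ g(1)] by blast
    then show ?thesis using g(2) by auto
  qed
qed

lemma Inter_lift_sets_subset:
  assumes "finite Q"
  shows "(\<Inter>R\<in>ksubsets Q 1 \<union> pairs0 A Q H \<union> {small_coords Q H n}. lift_set A Q R H) \<subseteq> H"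
proof
  fix f
  assume f: "f \<in> (\<Inter>R\<in>ksubsets Q 1 \<union> pairs0 A Q H \<union> {small_coords Q H n}. lift_set A Q R H)"
  let ?S0 = "small_coords Q H n"
  have S0: "finite ?S0" "?S0 \<subseteq> Q"
    using finite_subset[OF _ assms] unfolding small_coords_def by auto
  have agree: "\<exists>h\<in>H. \<forall>r\<in>?S0 \<union> T. h r = f r" if "finite T" "T \<subseteq> Q" for T
    using that
  proof (induction T rule: finite_induct)
    case empty
    have "f \<in> lift_set A Q ?S0 H" using f by blast
    then obtain h where "h \<in> H" "\<And>r. r \<in> ?S0 \<Longrightarrow> h r = f r"
      by (rule lift_set_agrees) auto
    then show ?case by auto
  next
    case (insert q T)
    then obtain g where "g \<in> H" "\<forall>r\<in>?S0 \<union> T. g r = f r" by auto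
    then have "\<exists>h\<in>H. \<forall>r\<in>insert q (?S0 \<union> T). h r = f r"
      using extend_agreement[of f "?S0 \<union> T" q g] f S0 insert by auto
    then show ?case by simp
  qed
  obtain h where h: "h \<in> H" "\<forall>r\<in>Q. h r = f r"
    using agree[OF assms subset_refl] unfolding Un_absorb1[OF S0(2)] by blast
  have "h \<in> Q \<rightarrow>\<^sub>E A" using Inv_PiE[OF H_Inv] h(1) by blast
  moreover have "f \<in> lift_set A Q ?S0 H" using f by blast
  then have "f \<in> Q \<rightarrow>\<^sub>E A" unfolding lift_set_def by blast
  ultimately have "h = f" using h(2) by (auto intro: PiE_ext)
  then show "f \<in> H" using h(1) by simp
qed

lemma decomposable_canonical:
  assumes "finite Q"
  shows "decomposable A Q (ksubsets Q 1 \<union> pairs0 A Q H \<union> {small_coords Q H n}) H"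
  unfolding decomposable_def
proof (rule subset_antisym)
  show "H \<subseteq> (\<Inter>R\<in>ksubsets Q 1 \<union> pairs0 A Q H \<union> {small_coords Q H n}. lift_set A Q R H)"
    using subset_lift_set[OF Inv_PiE[OF H_Inv]] by (rule INT_greatest)
qed (rule Inter_lift_sets_subset[OF assms])

end

theorem theorem2:
  fixes A :: "'a set" and Q :: "'q set" and H :: "('q \<Rightarrow> 'a) set"
    and n :: nat and F :: "'a op set"
  assumes "finite A" "A \<noteq> {}" "finite Q" "Q \<noteq> {}"
    and "H \<subseteq> Q \<rightarrow>\<^sub>E A" "finite H" "H \<noteq> {}"
    and "n \<ge> 3" and "is_clone A F" and "Delta_s A F n"
  shows "H \<in> Inv A Q F \<longleftrightarrow>
    ((\<forall>P \<in> ksubsets Q 1 \<union> pairs0 A Q H \<union> {small_coords Q H n}.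
        restr_set H P \<in> Inv A P F) \<and>
     decomposable A Q (ksubsets Q 1 \<union> pairs0 A Q H \<union> {small_coords Q H n}) H)"
    (is "_ \<longleftrightarrow> (\<forall>P\<in>?RR. _) \<and> _")
proof -
  have RR_subset: "R \<subseteq> Q" if "R \<in> ?RR" for R
    using that unfolding ksubsets_def pairs0_def small_coords_def by auto
  show ?thesis
  proof
    assume H_Inv: "H \<in> Inv A Q F"
    obtain i where "Delta_s_invariant A Q H F n i"
      using assms(1,8,10) H_Inv unfolding Delta_s_def Delta_s_invariant_def by blast
    then have "decomposable A Q ?RR H"
      by (rule Delta_s_invariant.decomposable_canonical) (fact assms(3))
    moreover have "restr_set H P \<in> Inv A P F" if "P \<in> ?RR" for P
      using restr_set_Inv[OF H_Inv RR_subset[OF that]] .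
    ultimately show "(\<forall>P\<in>?RR. restr_set H P \<in> Inv A P F) \<and> decomposable A Q ?RR H"
      by blast
  next
    assume "(\<forall>P\<in>?RR. restr_set H P \<in> Inv A P F) \<and> decomposable A Q ?RR H"
    moreover have "F \<subseteq> ops A" using assms(9) unfolding is_clone_def by blast
    ultimately show "H \<in> Inv A Q F"
      using Inv_if_decomposable[OF _ assms(5)] RR_subset by blast
  qed
qed

end
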